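(* Let $i,j\in[s]$ with $i\neq j$. Then there is no homomorphism from $F_i^{\bullet\bullet}$ to $F_j^{\bullet\bullet}$ (both viewed as ordinary digraphs).
   Context: All digraphs are finite and loopless; a tournament is a digraph in which every pair of distinct vertices is joined by exactly one arc. A homomorphism from a digraph $F$ to a digraph $H$ is a map $\varphi:V(F)\to V(H)$ with $(\varphi(u),\varphi(v))\in E(H)$ whenever $(u,v)\in E(F)$. Construction of $F_i^{\bullet\bullet}$: fix $s\in\mathbb{N}^+$, a positive integer $m$, and a tournament $F_0$ on vertex set $[m]$ satisfying: (I) every vertex has out-degree and in-degree at most $2m/3$; (II) there are no disjoint $A_1,A_2\subseteq[m]$ with $|A_1|=|A_2|=\lceil\sqrt m\,\rceil$ such that $(a_1,a_2)$ is an arc for all $a_1\in A_1,a_2\in A_2$; (III) for every $S\subseteq[m]$ with $|S|\ge 2m/13-\sqrt m$, $F_0[S]$ contains a directed cycle. Let $k_1,\dots,k_s$ be integers in the open interval $(2m/3+2,\,5m/6)$ with $k_i>k_{i+1}+1$ for $1\le i<s$. For $i\in[s]$, $F_i^{\bullet\bullet}$ is the digraph on vertex set $[m]\cup\{z_i,w_i\}$ ($z_i,w_i$ two new vertices, called roots) whose arcs are all arcs of $F_0$, together with the arcs $z_i\to v$ and $v\to w_i$ for every $1\le v\le k_i$, and the arcs $u\to z_i$ and $w_i\to u$ for every $k_i<u\le m$. There is no arc between $z_i$ and $w_i$. *)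

theory Defs
  imports Complex_Main
begin

datatype vtx = Base nat | Zr | Wr

type_synonym 'a digraph = "'a set \<times> ('a \<times> 'a) set"

definition is_hom :: "'a digraph \<Rightarrow> 'b digraph \<Rightarrow> ('a \<Rightarrow> 'b) \<Rightarrow> bool" where
  "is_hom F H \<phi> \<longleftrightarrow> (\<forall>v\<in>fst F. \<phi> v \<in> fst H) \<and>
     (\<forall>u v. (u, v) \<in> snd F \<longrightarrow> (\<phi> u, \<phi> v) \<in> snd H)"

definition is_tournament :: "'a set \<Rightarrow> ('a \<times> 'a) set \<Rightarrow> bool" where
  "is_tournament V E \<longleftrightarrow> E \<subseteq> V \<times> V \<and> (\<forall>v. (v, v) \<notin> E) \<and>
     (\<forall>u\<in>V. \<forall>v\<in>V. u \<noteq> v \<longrightarrow> ((u, v) \<in> E \<longleftrightarrow> (v, u) \<notin> E))"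

definition has_dicycle_in :: "('a \<times> 'a) set \<Rightarrow> 'a set \<Rightarrow> bool" where
  "has_dicycle_in E S \<longleftrightarrow> (\<exists>xs. 2 \<le> length xs \<and> distinct xs \<and> set xs \<subseteq> S \<and>
     (\<forall>i < length xs. (xs ! i, xs ! (Suc i mod length xs)) \<in> E))"

definition F0_ok :: "nat \<Rightarrow> (nat \<times> nat) set \<Rightarrow> bool" where
  "F0_ok m E \<longleftrightarrow> is_tournament {1..m} E \<and>
    (\<forall>u\<in>{1..m}. real (card {v. (u, v) \<in> E}) \<le> 2 * real m / 3 \<and>
                 real (card {v. (v, u) \<in> E}) \<le> 2 * real m / 3) \<and>
    \<not> (\<exists>A1 A2. A1 \<subseteq> {1..m} \<and> A2 \<subseteq> {1..m} \<and> A1 \<inter> A2 = {} \<and>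
          int (card A1) = \<lceil>sqrt (real m)\<rceil> \<and> int (card A2) = \<lceil>sqrt (real m)\<rceil> \<and>
          (\<forall>a1\<in>A1. \<forall>a2\<in>A2. (a1, a2) \<in> E)) \<and>
    (\<forall>S. S \<subseteq> {1..m} \<and> real (card S) \<ge> 2 * real m / 13 - sqrt (real m) \<longrightarrow>
          has_dicycle_in (E \<inter> (S \<times> S)) S)"

definition Fbb :: "nat \<Rightarrow> (nat \<times> nat) set \<Rightarrow> nat \<Rightarrow> vtx digraph" where
  "Fbb m E k =
    (Base ` {1..m} \<union> {Zr, Wr},
     {(Base u, Base v) | u v. (u, v) \<in> E} \<union>
     {(Zr, Base v) | v. 1 \<le> v \<and> v \<le> k} \<union> {(Base v, Wr) | v. 1 \<le> v \<and> v \<le> k} \<union>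
     {(Base u, Zr) | u. k < u \<and> u \<le> m} \<union> {(Wr, Base u) | u. k < u \<and> u \<le> m})"

end

theory Submission
  imports Defs
begin

text \<open>The underlying graph of \<open>F\<^sup>\<bullet>\<^sup>\<bullet>\<close> is complete except for the pair of roots, and the target
  is an oriented graph with the same number of vertices. Hence a homomorphism
  \<open>F\<^sup>\<bullet>\<^sup>\<bullet>\<^sub>a \<rightarrow> F\<^sup>\<bullet>\<^sup>\<bullet>\<^sub>b\<close> is injective (the roots are separated by the path \<open>z \<rightarrow> 1 \<rightarrow> w\<close>),
  hence bijective, and it must send the only non-adjacent pair \<open>{z, w}\<close> onto itself.
  If \<open>z \<mapsto> z\<close>, comparing out- and in-neighbourhoods of \<open>z\<close> gives \<open>a \<le> b\<close> and
  \<open>m - a \<le> m - b\<close>, so \<open>a = b\<close>; if \<open>z \<mapsto> w\<close>, the out-neighbourhoods give \<open>a \<le> m - b\<close>.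
  Both are excluded since the thresholds are distinct and \<open>k\<^sub>i + k\<^sub>j > 4m/3\<close>.\<close>

definition adjacent :: "'a digraph \<Rightarrow> 'a \<Rightarrow> 'a \<Rightarrow> bool" where
  "adjacent G x y \<longleftrightarrow> (x, y) \<in> snd G \<or> (y, x) \<in> snd G"

lemma is_hom_arc: "is_hom F H \<phi> \<Longrightarrow> (x, y) \<in> snd F \<Longrightarrow> (\<phi> x, \<phi> y) \<in> snd H"
  by (simp add: is_hom_def)

lemma is_hom_vertex: "is_hom F H \<phi> \<Longrightarrow> x \<in> fst F \<Longrightarrow> \<phi> x \<in> fst H"
  by (simp add: is_hom_def)

lemma is_hom_adjacent: "is_hom F H \<phi> \<Longrightarrow> adjacent F x y \<Longrightarrow> adjacent H (\<phi> x) (\<phi> y)"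
  by (auto simp: adjacent_def is_hom_def)

lemma is_hom_adjacent_distinct:
  "is_hom F H \<phi> \<Longrightarrow> asym (snd H) \<Longrightarrow> adjacent F x y \<Longrightarrow> \<phi> x \<noteq> \<phi> y"
  using is_hom_adjacent by (fastforce simp: adjacent_def dest: asymD)

lemma is_hom_path2_distinct:
  assumes "is_hom F H \<phi>" "asym (snd H)" "(x, y) \<in> snd F" "(y, z) \<in> snd F"
  shows "\<phi> x \<noteq> \<phi> z"
  using assms by (metis asymD is_hom_arc)

lemma is_hom_converse:
  "is_hom F H \<phi> \<Longrightarrow> is_hom (fst F, (snd F)\<inverse>) (fst H, (snd H)\<inverse>) \<phi>"
  by (simp add: is_hom_def)

lemma card_Image_le_if_is_hom:
  assumes hom: "is_hom F H \<phi>" and inj: "inj_on \<phi> (fst F)"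
    and arcs: "snd F \<subseteq> fst F \<times> fst F" and fin: "finite (snd H `` {\<phi> x})"
  shows "card (snd F `` {x}) \<le> card (snd H `` {\<phi> x})"
proof -
  have "inj_on \<phi> (snd F `` {x})"
    using arcs by (blast intro: inj_on_subset[OF inj])
  then have "card (snd F `` {x}) = card (\<phi> ` (snd F `` {x}))"
    by (simp add: card_image)
  also have "\<dots> \<le> card (snd H `` {\<phi> x})"
    using hom fin by (intro card_mono) (auto dest: is_hom_arc)
  finally show ?thesis .
qed

lemma Fbb_vertices: "fst (Fbb m E k) = Base ` {1..m} \<union> {Zr, Wr}"
  by (simp add: Fbb_def)

lemma card_Fbb_vertices: "card (fst (Fbb m E k)) = m + 2"
proof -
  have "card (Base ` {1..m}) = m" by (simp add: card_image inj_on_def)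
  moreover have "Base ` {1..m} \<inter> {Zr, Wr} = {}" by auto
  ultimately show ?thesis unfolding Fbb_vertices by (simp add: card_Un_disjoint)
qed

lemma Fbb_arc_iff [simp]:
  "(Base u, Base v) \<in> snd (Fbb m E k) \<longleftrightarrow> (u, v) \<in> E"
  "(Zr, Base v) \<in> snd (Fbb m E k) \<longleftrightarrow> 1 \<le> v \<and> v \<le> k"
  "(Base v, Wr) \<in> snd (Fbb m E k) \<longleftrightarrow> 1 \<le> v \<and> v \<le> k"
  "(Base u, Zr) \<in> snd (Fbb m E k) \<longleftrightarrow> k < u \<and> u \<le> m"
  "(Wr, Base u) \<in> snd (Fbb m E k) \<longleftrightarrow> k < u \<and> u \<le> m"
  "(Zr, Zr) \<notin> snd (Fbb m E k)" "(Zr, Wr) \<notin> snd (Fbb m E k)"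
  "(Wr, Zr) \<notin> snd (Fbb m E k)" "(Wr, Wr) \<notin> snd (Fbb m E k)"
  by (auto simp: Fbb_def)

lemma Fbb_arcs_subset:
  "E \<subseteq> {1..m} \<times> {1..m} \<Longrightarrow> k \<le> m \<Longrightarrow> snd (Fbb m E k) \<subseteq> fst (Fbb m E k) \<times> fst (Fbb m E k)"
  by (auto simp: Fbb_def)

lemma Fbb_out_Zr: "snd (Fbb m E k) `` {Zr} = Base ` {1..k}"
  by (auto simp: Fbb_def)

lemma Fbb_in_Zr: "(snd (Fbb m E k))\<inverse> `` {Zr} = Base ` {k<..m}"
  by (auto simp: Fbb_def)

lemma Fbb_out_Wr: "snd (Fbb m E k) `` {Wr} = Base ` {k<..m}"
  by (auto simp: Fbb_def)

lemma asym_Fbb: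
  assumes "is_tournament {1..m} E"
  shows "asym (snd (Fbb m E k))"
proof (rule asymI)
  have E_asym: "(v, u) \<notin> E" if "(u, v) \<in> E" for u v
    using assms that unfolding is_tournament_def by (metis mem_Sigma_iff subsetD)
  fix x y assume "(x, y) \<in> snd (Fbb m E k)"
  then show "(y, x) \<notin> snd (Fbb m E k)"
    by (cases x; cases y) (auto dest: E_asym)
qed

lemma Fbb_adjacent:
  assumes "is_tournament {1..m} E" "x \<in> fst (Fbb m E k)" "y \<in> fst (Fbb m E k)"
    and "x \<noteq> y" "{x, y} \<noteq> {Zr, Wr}"
  shows "adjacent (Fbb m E k) x y"
proof -
  have E_total: "(u, v) \<in> E" if "(v, u) \<notin> E" "u \<in> {1..m}" "v \<in> {1..m}" "u \<noteq> v" for u v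
    using assms(1) that unfolding is_tournament_def by blast
  show ?thesis
    using assms(2-5) unfolding Fbb_vertices adjacent_def
    by (cases x; cases y) (auto intro: E_total simp: doubleton_eq_iff)
qed

lemma Fbb_hom_inj_on:
  assumes tour: "is_tournament {1..m} E" and "1 \<le> a"
    and hom: "is_hom (Fbb m E a) (Fbb m E b) \<phi>"
  shows "inj_on \<phi> (fst (Fbb m E a))"
proof (rule inj_onI, rule ccontr)
  fix x y assume x: "x \<in> fst (Fbb m E a)" and y: "y \<in> fst (Fbb m E a)"
    and eq: "\<phi> x = \<phi> y" and ne: "x \<noteq> y"
  have roots_distinct: "\<phi> Zr \<noteq> \<phi> Wr"
    using \<open>1 \<le> a\<close> by (intro is_hom_path2_distinct[OF hom asym_Fbb[OF tour], of _ "Base 1"]) auto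
  show False
  proof (cases "{x, y} = {Zr, Wr}")
    case True
    with eq ne roots_distinct show False by (auto simp: doubleton_eq_iff)
  next
    case False
    with tour x y ne have "adjacent (Fbb m E a) x y" by (rule Fbb_adjacent)
    with eq show False using is_hom_adjacent_distinct[OF hom asym_Fbb[OF tour]] by blast
  qed
qed

lemma Fbb_hom_root:
  assumes tour: "is_tournament {1..m} E" and "1 \<le> a"
    and hom: "is_hom (Fbb m E a) (Fbb m E b) \<phi>"
  shows "\<phi> Zr = Zr \<or> \<phi> Zr = Wr"
proof -
  let ?V = "fst (Fbb m E a)"
  have inj: "inj_on \<phi> ?V" using Fbb_hom_inj_on[OF tour \<open>1 \<le> a\<close> hom] .
  have "\<phi> ` ?V = fst (Fbb m E b)"
  proof (rule card_subset_eq)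
    show "finite (fst (Fbb m E b))" by (simp add: Fbb_vertices)
    show "\<phi> ` ?V \<subseteq> fst (Fbb m E b)" using hom by (auto dest: is_hom_vertex)
    show "card (\<phi> ` ?V) = card (fst (Fbb m E b))"
      using inj by (simp add: card_image card_Fbb_vertices)
  qed
  then have "Zr \<in> \<phi> ` ?V" "Wr \<in> \<phi> ` ?V" by (simp_all add: Fbb_vertices)
  then obtain x y where x: "x \<in> ?V" "\<phi> x = Zr" and y: "y \<in> ?V" "\<phi> y = Wr"
    by (metis imageE)
  have "\<not> adjacent (Fbb m E b) (\<phi> x) (\<phi> y)" by (simp add: x y adjacent_def)
  then have "\<not> adjacent (Fbb m E a) x y" using is_hom_adjacent[OF hom] by blast
  moreover have "x \<noteq> y" using x y by auto
  ultimately have "{x, y} = {Zr, Wr}" using Fbb_adjacent[OF tour x(1) y(1)] by blast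
  with x y show ?thesis by (auto simp: doubleton_eq_iff)
qed

lemma Fbb_no_hom:
  assumes tour: "is_tournament {1..m} E"
    and "1 \<le> a" "a \<le> m" "b \<le> m" "a \<noteq> b" "m < a + b"
  shows "\<not> is_hom (Fbb m E a) (Fbb m E b) \<phi>"
proof
  assume hom: "is_hom (Fbb m E a) (Fbb m E b) \<phi>"
  have inj: "inj_on \<phi> (fst (Fbb m E a))" using Fbb_hom_inj_on[OF tour \<open>1 \<le> a\<close> hom] .
  have arcs: "snd (Fbb m E a) \<subseteq> fst (Fbb m E a) \<times> fst (Fbb m E a)"
    using tour \<open>a \<le> m\<close> by (intro Fbb_arcs_subset) (auto simp: is_tournament_def)
  have card_Base: "card (Base ` A) = card A" for A :: "nat set"
    by (simp add: card_image inj_on_def)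
  consider "\<phi> Zr = Zr" | "\<phi> Zr = Wr" using Fbb_hom_root[OF tour \<open>1 \<le> a\<close> hom] by blast
  then show False
  proof cases
    case 1
    have "card (snd (Fbb m E a) `` {Zr}) \<le> card (snd (Fbb m E b) `` {\<phi> Zr})"
      by (rule card_Image_le_if_is_hom[OF hom inj arcs]) (simp add: 1 Fbb_out_Zr)
    then have "a \<le> b" by (simp add: 1 Fbb_out_Zr card_Base)
    have "card ((snd (Fbb m E a))\<inverse> `` {Zr}) \<le> card ((snd (Fbb m E b))\<inverse> `` {\<phi> Zr})"
      by (rule card_Image_le_if_is_hom[OF is_hom_converse[OF hom], simplified])
        (use inj arcs in \<open>auto simp: 1 Fbb_in_Zr\<close>)
    then have "m - a \<le> m - b" by (simp add: 1 Fbb_in_Zr card_Base)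
    with \<open>a \<le> b\<close> assms show False by linarith
  next
    case 2
    have "card (snd (Fbb m E a) `` {Zr}) \<le> card (snd (Fbb m E b) `` {\<phi> Zr})"
      by (rule card_Image_le_if_is_hom[OF hom inj arcs]) (simp add: 2 Fbb_out_Wr)
    then have "a \<le> m - b" by (simp add: 2 Fbb_out_Zr Fbb_out_Wr card_Base)
    with assms show False by linarith
  qed
qed

lemma inj_on_if_Suc_decreasing:
  fixes k :: "nat \<Rightarrow> nat"
  assumes "\<And>t. 1 \<le> t \<Longrightarrow> t < s \<Longrightarrow> k (Suc t) < k t"
  shows "inj_on k {1..s}"
proof -
  have "k j < k i" if "1 \<le> i" "i < j" "j \<le> s" for i j
    using lift_Suc_mono_less_ivl[of "{1..<s}" "\<lambda>t. - int (k t)" i j] assms that by auto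
  then show ?thesis by (metis atLeastAtMost_iff inj_onI less_irrefl linorder_neqE_nat)
qed

theorem claim4p5:
  fixes s m :: nat and E :: "(nat \<times> nat) set" and k :: "nat \<Rightarrow> nat" and i j :: nat
  assumes "s \<ge> 1" and "m \<ge> 1"
    and "F0_ok m E"
    and "\<forall>t\<in>{1..s}. 2 * real m / 3 + 2 < real (k t) \<and> real (k t) < 5 * real m / 6"
    and "\<forall>t. 1 \<le> t \<and> t < s \<longrightarrow> k t > k (Suc t) + 1"
    and "i \<in> {1..s}" and "j \<in> {1..s}" and "i \<noteq> j"
  shows "\<not> (\<exists>\<phi>. is_hom (Fbb m E (k i)) (Fbb m E (k j)) \<phi>)"
proof -
  have tour: "is_tournament {1..m} E" using assms(3) unfolding F0_ok_def by blast
  have "inj_on k {1..s}" using assms(5) by (intro inj_on_if_Suc_decreasing) auto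
  then have "k i \<noteq> k j" using assms(6-8) by (meson inj_on_eq_iff)
  moreover have "1 \<le> k i" "k i \<le> m" "k j \<le> m" "m < k i + k j"
  proof -
    have "2 * real m / 3 + 2 < real (k i)" "real (k i) < 5 * real m / 6"
      and "2 * real m / 3 + 2 < real (k j)" "real (k j) < 5 * real m / 6"
      using assms(4,6,7) by blast+
    then show "1 \<le> k i" "k i \<le> m" "k j \<le> m" "m < k i + k j" by linarith+
  qed
  ultimately show ?thesis using Fbb_no_hom[OF tour] by blast
qed

end
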